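(* Assume (A1)–(A3). If $m_2<0$, then for every $k\ge0$ there exist $\tilde C>0$ and $\tilde\delta>0$ such that for all $i\ge k_0$, $j\in\{0,\dots,k_0-1\}$ and $\ell\ge0$, \[\mathbb P_{(i,j)}\bigl(Y(T^k)=\ell,\ T^k<\tau\bigr)\le\tilde C\exp(-\tilde\delta(i+\ell)),\] where $T^k=\inf\{n>0: X(n)\le\max(k_0-1,k)\}$ and $\tau=\inf\{n>0: Y(n)<k_0\}$.
   Context: Let $\mathbb N=\{0,1,2,\dots\}$ and fix an integer $k_0\ge1$. Let $\mu$, $\mu'_j$ ($0\le j<k_0$), $\mu''_i$ ($0\le i<k_0$), $\mu_{ij}$ ($0\le i,j<k_0$) be probability measures on $\mathbb Z^2$. The random walk $Z=(X(n),Y(n))$ on $\mathbb N^2$ has transition probabilities $p((i,j)\to(i',j'))$ equal to $\mu(i'-i,j'-j)$ if $i,j\ge k_0$; $\mu'_j(i'-i,j'-j)$ if $i\ge k_0$, $0\le j<k_0$; $\mu''_i(i'-i,j'-j)$ if $0\le i<k_0$, $j\ge k_0$; $\mu_{ij}(i'-i,j'-j)$ if $0\le i,j<k_0$; $\mathbb P_{(i,j)}$ is its law from $(i,j)$. Assumptions: (A1) $\mu(a,b)=0$ if $a<-k_0$ or $b<-k_0$; $\mu'_j(a,b)=0$ if $a<-k_0$ or $b<-j$; $\mu''_i(a,b)=0$ if $b<-k_0$ or $a<-i$; $\mu_{ij}(a,b)=0$ if $a<-i$ or $b<-j$. (A2) There are $\delta,\gamma,C>0$ with $\sup_{(i,j)\in\mathbb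 N^2}\mathbb E_{(i,j)}[\exp(\delta(X(1)-i)+\gamma(Y(1)-j))]\le C$. (A3) The random walk $Z_0$ on $\mathbb Z^2$ with increment law $\mu$, the chain $Z_1$ on $\mathbb N\times\mathbb Z$ (transitions $\mu$ for first coordinate $\ge k_0$, $\mu''_i$ for first coordinate $i<k_0$), the chain $Z_2$ on $\mathbb Z\times\mathbb N$ (transitions $\mu$ for second coordinate $\ge k_0$, $\mu'_j$ for second coordinate $j<k_0$), and $Z$ are irreducible on their state spaces. $m_2=\sum_{(a,b)}b\mu(a,b)$. *)

theory Defs
  imports "HOL-Probability.Probability"
begin

type_synonym state = "int \<times> int"

text \<open>Increment law of the walk Z at position x (positions are encoded as integer
  pairs; the walk lives on the nonnegative quadrant).\<close>
definition lawZ :: "nat \<Rightarrow> (int\<times>int) pmf \<Rightarrow> (nat \<Rightarrow> (int\<times>int) pmf) \<Rightarrow> (nat \<Rightarrow> (int\<times>int) pmf)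
    \<Rightarrow> (nat \<Rightarrow> nat \<Rightarrow> (int\<times>int) pmf) \<Rightarrow> state \<Rightarrow> (int\<times>int) pmf" where
  "lawZ k0 \<mu> \<mu>' \<mu>'' \<mu>2 x =
     (if fst x \<ge> int k0 \<and> snd x \<ge> int k0 then \<mu>
      else if fst x \<ge> int k0 then \<mu>' (nat (snd x))
      else if snd x \<ge> int k0 then \<mu>'' (nat (fst x))
      else \<mu>2 (nat (fst x)) (nat (snd x)))"

definition law1 :: "nat \<Rightarrow> (int\<times>int) pmf \<Rightarrow> (nat \<Rightarrow> (int\<times>int) pmf) \<Rightarrow> state \<Rightarrow> (int\<times>int) pmf" where
  "law1 k0 \<mu> \<mu>'' x = (if fst x \<ge> int k0 then \<mu> else \<mu>'' (nat (fst x)))"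

definition law2 :: "nat \<Rightarrow> (int\<times>int) pmf \<Rightarrow> (nat \<Rightarrow> (int\<times>int) pmf) \<Rightarrow> state \<Rightarrow> (int\<times>int) pmf" where
  "law2 k0 \<mu> \<mu>' x = (if snd x \<ge> int k0 then \<mu> else \<mu>' (nat (snd x)))"

definition trans :: "(state \<Rightarrow> (int\<times>int) pmf) \<Rightarrow> state \<Rightarrow> state pmf" where
  "trans L x = map_pmf (\<lambda>d. (fst x + fst d, snd x + snd d)) (L x)"

definition irreducible_on :: "state set \<Rightarrow> (state \<Rightarrow> (int\<times>int) pmf) \<Rightarrow> bool" where
  "irreducible_on S L \<longleftrightarrow>
     (\<forall>x\<in>S. \<forall>y\<in>S. (x, y) \<in> {(a, b). a \<in> S \<and> b \<in> S \<and> pmf (trans L a) b > 0}\<^sup>*)"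

text \<open>first_pass L H G l n x = P_x(T = n, Z(m) \<in> G for 1 \<le> m \<le> n, Y(n) = l), where
  T = inf {n > 0. Z(n) \<in> H} (first-step decomposition of the path probability).\<close>
fun first_pass :: "(state \<Rightarrow> (int\<times>int) pmf) \<Rightarrow> state set \<Rightarrow> state set \<Rightarrow> int \<Rightarrow> nat \<Rightarrow> state \<Rightarrow> ennreal" where
  "first_pass L H G l 0 x = 0"
| "first_pass L H G l (Suc n) x =
     (\<integral>\<^sup>+ y. (if y \<notin> G then 0
               else if y \<in> H then (if n = 0 \<and> snd y = l then 1 else 0)
               else first_pass L H G l n y) \<partial>measure_pmf (trans L x))"

text \<open>P_x(Y(T) = l, T < \<tau>) with T the hitting time (n > 0) of H and
  \<tau> = inf {n > 0. Z(n) \<notin> G}.\<close>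
definition hit_before_exit :: "(state \<Rightarrow> (int\<times>int) pmf) \<Rightarrow> state set \<Rightarrow> state set \<Rightarrow> int \<Rightarrow> state \<Rightarrow> ennreal" where
  "hit_before_exit L H G l x = (\<Sum>n. first_pass L H G l n x)"

end

theory Submission
  imports Defs
begin

(* Because m2 < 0, the increments of \<mu> have exponential
   moments (A2) and first coordinates at least -k0 (A1), a Chernoff bound gives b > 0 with
   E exp (b \<Delta>Y) < 1, and then a > 0 with exp (a k0) E exp (b \<Delta>Y) \<le> 1. So
   V (x, y) = exp (a (K - x) + b (y - l)), K = max (k0 - 1) k, is superharmonic while the walk
   is strictly between the target {X \<le> K} and the exit {Y < k0}, where it moves with \<mu>, and
   V \<ge> 1 on the target at height l. The probability is therefore at most the expectation of V
   after the first step, which is O(exp (- a i - b l)). *)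

lemma exp_scaled_remainder_le:
  fixes s t :: real
  assumes "0 \<le> s" "0 \<le> t" "t \<le> 1"
  shows "exp (t * s) - 1 - t * s \<le> t\<^sup>2 * (exp s - 1 - s)"
proof -
  let ?r = "\<lambda>x::real. \<lambda>n. inverse (fact (n + 2)) * x ^ (n + 2)"
  have summable: "summable (?r x)" for x
    using summable_ignore_initial_segment[OF summable_exp[of x], of 2] by simp
  have remainder: "exp x - 1 - x = (\<Sum>n. ?r x n)" for x
    using exp_first_two_terms[of x] by simp
  have "?r (t * s) n \<le> t\<^sup>2 * ?r s n" for n
  proof -
    have "t ^ (n + 2) \<le> t\<^sup>2"
      using assms power_le_one[of t n] mult_left_mono[of "t ^ n" 1 "t\<^sup>2"]
      by (simp add: power_add power2_eq_square mult.commute)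
    moreover have "0 \<le> ?r s n"
      using assms by simp
    ultimately have "t ^ (n + 2) * ?r s n \<le> t\<^sup>2 * ?r s n"
      by (rule mult_right_mono)
    then show ?thesis
      by (simp add: power_mult_distrib mult_ac)
  qed
  then have "(\<Sum>n. ?r (t * s) n) \<le> (\<Sum>n. t\<^sup>2 * ?r s n)"
    using summable by (intro suminf_le) (auto intro: summable_mult)
  then show ?thesis
    by (simp only: remainder suminf_mult[OF summable])
qed

lemma exp_le_quadratic_of_nonpos:
  fixes s :: real
  assumes "s \<le> 0"
  shows "exp s \<le> 1 + s + s\<^sup>2 / 2"
proof -
  let ?f = "\<lambda>t::real. 1 + t + t\<^sup>2 / 2 - exp t"
  have "?f 0 \<le> ?f s"
  proof (rule DERIV_nonpos_imp_nonincreasing[OF assms])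
    fix x :: real
    have "(?f has_real_derivative 1 + x - exp x) (at x)"
      by (auto intro!: derivative_eq_intros)
    then show "\<exists>y. (?f has_real_derivative y) (at x) \<and> y \<le> 0"
      using exp_ge_add_one_self[of x] by auto
  qed
  then show ?thesis by simp
qed

lemma exp_le_quadratic_bound:
  fixes b c x K :: real
  assumes "0 < b" "b \<le> c" "- K \<le> x"
  shows "exp (b * x) \<le> 1 + b * x + b\<^sup>2 * (exp (c * x) / c\<^sup>2 + K\<^sup>2 / 2)"
proof (cases "0 \<le> x")
  case True
  then have "0 \<le> c * x"
    using assms by simp
  have "exp ((b / c) * (c * x)) - 1 - (b / c) * (c * x) \<le> (b / c)\<^sup>2 * (exp (c * x) - 1 - c * x)"
    using assms True by (intro exp_scaled_remainder_le) auto
  also have "\<dots> \<le> (b / c)\<^sup>2 * exp (c * x)"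
    using \<open>0 \<le> c * x\<close> by (intro mult_left_mono) auto
  finally have "exp (b * x) - 1 - b * x \<le> b\<^sup>2 * (exp (c * x) / c\<^sup>2)"
    using assms by (simp add: power_divide)
  moreover have "0 \<le> b\<^sup>2 * (K\<^sup>2 / 2)"
    by simp
  ultimately show ?thesis
    unfolding distrib_left by linarith
next
  case False
  have "x\<^sup>2 \<le> K\<^sup>2"
    using False assms by (simp add: abs_le_square_iff[symmetric])
  then have "(b * x)\<^sup>2 / 2 \<le> b\<^sup>2 * (K\<^sup>2 / 2)"
    by (simp add: power_mult_distrib mult_left_mono)
  moreover have "exp (b * x) \<le> 1 + b * x + (b * x)\<^sup>2 / 2"
    using False assms by (intro exp_le_quadratic_of_nonpos) (simp add: mult_nonneg_nonpos)
  moreover have "0 \<le> b\<^sup>2 * (exp (c * x) / c\<^sup>2)"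
    by simp
  ultimately show ?thesis
    unfolding distrib_left by linarith
qed

lemma exp_mult_le_one_plus_exp:
  fixes b g x :: real
  assumes "0 \<le> b" "b \<le> g"
  shows "exp (b * x) \<le> 1 + exp (g * x)"
proof (cases "0 \<le> x")
  case True
  then have "exp (b * x) \<le> exp (g * x)"
    using assms mult_right_mono[of b g x] by simp
  then show ?thesis
    by linarith
next
  case False
  then have "exp (b * x) \<le> 1"
    using assms by (simp add: mult_nonneg_nonpos)
  then show ?thesis
    using exp_gt_zero[of "g * x"] by linarith
qed

lemma exp_le_exp_mult_exp_min:
  fixes a b c i j k l :: real
  assumes "0 \<le> a" "0 \<le> b" "0 \<le> i" "0 \<le> l" "j \<le> k"
  shows "exp (a * (c - i) + b * (j - l)) \<le> exp (a * c + b * k) * exp (- min a b * (i + l))"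
proof -
  have "min a b * i \<le> a * i" "min a b * l \<le> b * l" "b * j \<le> b * k"
    using assms by (auto intro: mult_right_mono mult_left_mono)
  then show ?thesis
    by (simp add: algebra_simps flip: exp_add)
qed

lemma exists_exp_mult_le_one:
  fixes X :: ennreal and k :: real
  assumes "X < 1"
  shows "\<exists>a>0. ennreal (exp (a * k)) * X \<le> 1"
proof -
  obtain q where q: "X = ennreal q" "0 \<le> q" "q < 1"
    using assms by (cases X) auto
  show ?thesis
  proof (cases "q = 0")
    case True
    then show ?thesis
      using q by (intro exI[of _ 1]) simp
  next
    case False
    define a where "a = - ln q / (\<bar>k\<bar> + 1)"
    have "ln q < 0"
      using q False by simp
    then have "0 < a"
      by (simp add: a_def divide_neg_pos add_nonneg_pos)
    have "a * k \<le> a * (\<bar>k\<bar> + 1)"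
      using \<open>0 < a\<close> by (intro mult_left_mono) auto
    then have "exp (a * k) \<le> exp (- ln q)"
      by (simp add: a_def)
    also have "\<dots> = inverse q"
      using q False by (simp add: exp_minus)
    finally have "exp (a * k) * q \<le> inverse q * q"
      using q(2) by (rule mult_right_mono)
    with False have "exp (a * k) * q \<le> 1"
      by simp
    with \<open>0 < a\<close> show ?thesis
      using q by (intro exI[of _ a]) (simp add: ennreal_mult[symmetric])
  qed
qed

lemma integrable_of_exp_moment:
  fixes p :: "'a pmf" and f :: "'a \<Rightarrow> real" and g K :: real
  assumes g: "0 < g"
    and lower: "\<And>x. x \<in> set_pmf p \<Longrightarrow> - K \<le> f x"
    and moment: "(\<integral>\<^sup>+x. exp (g * f x) \<partial>p) < \<infinity>"
  shows "integrable p f"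
    and "0 \<le> b \<Longrightarrow> b \<le> g \<Longrightarrow> integrable p (\<lambda>x. exp (b * f x))"
proof -
  have int_exp_g: "integrable p (\<lambda>x. exp (g * f x))"
    using moment by (intro integrableI_nonneg) auto
  show "integrable p (\<lambda>x. exp (b * f x))" if "0 \<le> b" "b \<le> g"
  proof (rule Bochner_Integration.integrable_bound)
    show "integrable p (\<lambda>x. 1 + exp (g * f x))"
      using int_exp_g by simp
    show "AE x in p. norm (exp (b * f x)) \<le> norm (1 + exp (g * f x))"
      using exp_mult_le_one_plus_exp[OF that] by (auto intro!: AE_I2 add_nonneg_nonneg)
  qed simp
  show "integrable p f"
  proof (rule Bochner_Integration.integrable_bound)
    show "integrable p (\<lambda>x. \<bar>K\<bar> + exp (g * f x) / g)"
      using int_exp_g by simp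
    show "AE x in p. norm (f x) \<le> norm (\<bar>K\<bar> + exp (g * f x) / g)"
    proof (rule AE_pmfI)
      fix x
      assume "x \<in> set_pmf p"
      have "g * f x \<le> exp (g * f x)"
        using exp_ge_add_one_self[of "g * f x"] by linarith
      with g have "f x \<le> exp (g * f x) / g"
        by (simp add: field_simps)
      moreover have "0 \<le> exp (g * f x) / g"
        using g by simp
      ultimately show "norm (f x) \<le> norm (\<bar>K\<bar> + exp (g * f x) / g)"
        using lower[OF \<open>x \<in> set_pmf p\<close>] by simp
    qed
  qed simp
qed

lemma exp_moment_less_one_if_negative_mean:
  fixes p :: "'a pmf" and f :: "'a \<Rightarrow> real" and g K :: real
  assumes g: "0 < g"
    and lower: "\<And>x. x \<in> set_pmf p \<Longrightarrow> - K \<le> f x"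
    and moment: "(\<integral>\<^sup>+x. exp (g * f x) \<partial>p) < \<infinity>"
    and mean: "measure_pmf.expectation p f < 0"
  shows "\<exists>b>0. b \<le> g \<and> (\<integral>\<^sup>+x. exp (b * f x) \<partial>p) < 1"
proof -
  note int_f = integrable_of_exp_moment(1)[OF g lower moment]
    and int_exp = integrable_of_exp_moment(2)[OF g lower moment]
  define M where "M x = exp (g * f x) / g\<^sup>2 + K\<^sup>2 / 2" for x
  define m where "m = measure_pmf.expectation p f"
  define EM where "EM = measure_pmf.expectation p M"
  have int_M: "integrable p M"
    unfolding M_def using int_exp[of g] g by simp
  have "0 \<le> EM"
    unfolding EM_def M_def by (intro integral_nonneg_AE) auto
  \<comment> \<open>\<open>exp (b f) \<le> 1 + b f + b\<^sup>2 M\<close> pointwise, so the moment is at most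
      \<open>1 + b m + b\<^sup>2 EM\<close>, which is \<open>< 1\<close> once \<open>b EM \<le> -m/2\<close>\<close>
  define b where "b = min g (- m / (2 * (EM + 1)))"
  have "m < 0"
    using mean by (simp add: m_def)
  have "b * EM \<le> - m / (2 * (EM + 1)) * EM"
    using \<open>0 \<le> EM\<close> by (intro mult_right_mono) (auto simp: b_def)
  also have "\<dots> \<le> - m / 2"
    using \<open>0 \<le> EM\<close> \<open>m < 0\<close> by (simp add: field_simps)
  finally have b: "0 < b" "b \<le> g" "b * EM \<le> - m / 2"
    using g \<open>0 \<le> EM\<close> \<open>m < 0\<close> by (auto simp: b_def divide_neg_pos)
  have "measure_pmf.expectation p (\<lambda>x. exp (b * f x))
      \<le> measure_pmf.expectation p (\<lambda>x. 1 + b * f x + b\<^sup>2 * M x)"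
    using b lower int_exp[of b] int_f int_M unfolding M_def
    by (intro integral_mono_AE AE_pmfI exp_le_quadratic_bound) auto
  also have "\<dots> = 1 + b * m + b * (b * EM)"
    unfolding m_def EM_def using int_f int_M by (simp add: power2_eq_square)
  also have "\<dots> < 1"
    using mult_pos_neg[OF b(1) \<open>m < 0\<close>] mult_left_mono[OF b(3), of b] b(1) by simp
  finally have "(\<integral>\<^sup>+x. exp (b * f x) \<partial>p) < 1"
    using b int_exp[of b] by (simp add: nn_integral_eq_integral)
  with b show ?thesis
    by blast
qed

lemma nn_integral_exp_mult_le_one_plus:
  fixes p :: "'a pmf" and f :: "'a \<Rightarrow> real"
  assumes "0 \<le> b" "b \<le> g"
  shows "(\<integral>\<^sup>+x. exp (b * f x) \<partial>p) \<le> 1 + (\<integral>\<^sup>+x. exp (g * f x) \<partial>p)"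
proof -
  have "ennreal (exp (b * f x)) \<le> 1 + ennreal (exp (g * f x))" for x
    using ennreal_leI[OF exp_mult_le_one_plus_exp[OF assms]] by simp
  then have "(\<integral>\<^sup>+x. exp (b * f x) \<partial>p) \<le> (\<integral>\<^sup>+x. 1 + ennreal (exp (g * f x)) \<partial>p)"
    by (rule nn_integral_mono)
  then show ?thesis
    by (simp add: nn_integral_add)
qed

lemma nn_integral_exp_minus_fst_le:
  fixes p :: "(int \<times> int) pmf" and h :: "int \<times> int \<Rightarrow> real" and k :: int and a :: real
  assumes "0 \<le> a" and jumps: "\<And>d. d \<in> set_pmf p \<Longrightarrow> - k \<le> fst d"
  shows "(\<integral>\<^sup>+d. exp (h d - a * real_of_int (fst d)) \<partial>p) \<le> ennreal (exp (a * k)) * (\<integral>\<^sup>+d. exp (h d) \<partial>p)"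
proof -
  have "(\<integral>\<^sup>+d. exp (h d - a * real_of_int (fst d)) \<partial>p) \<le> (\<integral>\<^sup>+d. exp (a * k) * exp (h d) \<partial>p)"
  proof (rule nn_integral_mono_AE, rule AE_pmfI)
    fix d
    assume "d \<in> set_pmf p"
    then have "- k \<le> fst d"
      by (rule jumps)
    then have "- real_of_int (fst d) \<le> k"
      by linarith
    then have "- a * real_of_int (fst d) \<le> a * k"
      using mult_left_mono[of "- real_of_int (fst d)" k a] \<open>0 \<le> a\<close> by simp
    then show "ennreal (exp (h d - a * real_of_int (fst d))) \<le> ennreal (exp (a * k) * exp (h d))"
      by (intro ennreal_leI) (simp flip: exp_add)
  qed
  then show ?thesis
    by (simp add: nn_integral_cmult ennreal_mult)
qed

lemma nn_integral_exp_snd_le_joint: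
  fixes p :: "(int \<times> int) pmf" and k :: int and a g :: real and C :: ennreal
  assumes "0 \<le> a" and "\<And>d. d \<in> set_pmf p \<Longrightarrow> - k \<le> fst d"
    and joint: "(\<integral>\<^sup>+d. exp (a * real_of_int (fst d) + g * real_of_int (snd d)) \<partial>p) \<le> C"
  shows "(\<integral>\<^sup>+d. exp (g * real_of_int (snd d)) \<partial>p) \<le> ennreal (exp (a * k)) * C"
proof -
  have "(\<integral>\<^sup>+d. exp (g * real_of_int (snd d)) \<partial>p)
      \<le> ennreal (exp (a * k)) * (\<integral>\<^sup>+d. exp (a * real_of_int (fst d) + g * real_of_int (snd d)) \<partial>p)"
    using nn_integral_exp_minus_fst_le[OF assms(1,2), where h = "\<lambda>d. a * real_of_int (fst d) + g * real_of_int (snd d)"]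
    by simp
  also have "\<dots> \<le> ennreal (exp (a * k)) * C"
    using joint by (rule mult_left_mono) simp
  finally show ?thesis .
qed

lemma hit_before_exit_le_superharmonic:
  fixes V :: "state \<Rightarrow> ennreal"
  assumes super: "\<And>z. z \<in> G \<Longrightarrow> z \<notin> H \<Longrightarrow> (\<integral>\<^sup>+y. V y \<partial>trans L z) \<le> V z"
    and hit: "\<And>y. y \<in> H \<Longrightarrow> snd y = l \<Longrightarrow> 1 \<le> V y"
  shows "hit_before_exit L H G l x \<le> (\<integral>\<^sup>+y. V y \<partial>trans L x)"
proof -
  have "(\<Sum>m<N. first_pass L H G l m z) \<le> (\<integral>\<^sup>+y. V y \<partial>trans L z)" for N z
  proof (induction N arbitrary: z)
    case 0
    show ?case
      by simp
  next
    case (Suc N)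
    define F where "F m y = (if y \<notin> G then 0
      else if y \<in> H then (if m = 0 \<and> snd y = l then 1 else 0)
      else first_pass L H G l m y)" for m y
    have "(\<Sum>m<Suc N. first_pass L H G l m z) = (\<Sum>m<N. \<integral>\<^sup>+y. F m y \<partial>trans L z)"
      unfolding sum.lessThan_Suc_shift by (simp add: F_def)
    also have "\<dots> = (\<integral>\<^sup>+y. (\<Sum>m<N. F m y) \<partial>trans L z)"
      by (rule nn_integral_sum[symmetric]) auto
    also have "\<dots> \<le> (\<integral>\<^sup>+y. V y \<partial>trans L z)"
    proof (rule nn_integral_mono)
      fix y
      show "(\<Sum>m<N. F m y) \<le> V y"
      proof (cases "y \<in> G \<and> y \<notin> H")
        case True
        then show ?thesis
          using order.trans[OF Suc.IH super] by (simp add: F_def)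
      next
        case False
        then have "(\<Sum>m<N. F m y) \<le> (if y \<in> H \<and> snd y = l then 1 else 0)"
          by (cases N) (simp_all add: F_def sum.lessThan_Suc_shift)
        also have "\<dots> \<le> V y"
          using hit by simp
        finally show ?thesis .
      qed
    qed
    finally show ?case .
  qed
  then show ?thesis
    unfolding hit_before_exit_def by (intro suminf_le_const) auto
qed

lemma hit_before_exit_le_exp:
  fixes L :: "state \<Rightarrow> (int \<times> int) pmf" and \<mu> :: "(int \<times> int) pmf" and x y K k l :: int and a b :: real
  assumes inner: "\<And>z. z \<in> G \<Longrightarrow> z \<notin> H \<Longrightarrow> L z = \<mu>"
    and jumps: "\<And>d. d \<in> set_pmf \<mu> \<Longrightarrow> - k \<le> fst d"
    and jumps_start: "\<And>d. d \<in> set_pmf (L (x, y)) \<Longrightarrow> - k \<le> fst d"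
    and target: "\<And>z. z \<in> H \<Longrightarrow> fst z \<le> K"
    and "0 \<le> a"
    and drift: "ennreal (exp (a * k)) * (\<integral>\<^sup>+d. exp (b * real_of_int (snd d)) \<partial>\<mu>) \<le> 1"
  shows "hit_before_exit L H G l (x, y)
    \<le> ennreal (exp (a * (K + k - x) + b * (y - l))) * (\<integral>\<^sup>+d. exp (b * real_of_int (snd d)) \<partial>L (x, y))"
proof -
  \<comment> \<open>superharmonic on \<open>G - H\<close> by \<open>drift\<close>, and at least 1 on \<open>H\<close> at height \<open>l\<close> by \<open>target\<close>\<close>
  define V where "V z = ennreal (exp (a * (K - fst z) + b * (snd z - l)))" for z :: state
  have step: "(\<integral>\<^sup>+w. V w \<partial>trans L z) \<le> V z * (ennreal (exp (a * k)) * (\<integral>\<^sup>+d. exp (b * real_of_int (snd d)) \<partial>L z))"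
    if "\<And>d. d \<in> set_pmf (L z) \<Longrightarrow> - k \<le> fst d" for z
  proof -
    let ?c = "a * (K - fst z) + b * (snd z - l)"
    have "(\<integral>\<^sup>+w. V w \<partial>trans L z) = (\<integral>\<^sup>+d. exp ((?c + b * real_of_int (snd d)) - a * real_of_int (fst d)) \<partial>L z)"
      by (simp add: V_def trans_def algebra_simps)
    also have "\<dots> \<le> ennreal (exp (a * k)) * (\<integral>\<^sup>+d. exp (?c + b * real_of_int (snd d)) \<partial>L z)"
      by (rule nn_integral_exp_minus_fst_le[OF \<open>0 \<le> a\<close> that])
    also have "(\<integral>\<^sup>+d. exp (?c + b * real_of_int (snd d)) \<partial>L z)
        = (\<integral>\<^sup>+d. V z * exp (b * real_of_int (snd d)) \<partial>L z)"
      by (intro nn_integral_cong) (simp add: V_def exp_add ennreal_mult)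
    also have "\<dots> = V z * (\<integral>\<^sup>+d. exp (b * real_of_int (snd d)) \<partial>L z)"
      by (rule nn_integral_cmult) simp
    finally show ?thesis
      by (simp only: ac_simps)
  qed
  have "hit_before_exit L H G l (x, y) \<le> (\<integral>\<^sup>+z. V z \<partial>trans L (x, y))"
  proof (rule hit_before_exit_le_superharmonic)
    fix z
    assume "z \<in> G" "z \<notin> H"
    then have "(\<integral>\<^sup>+w. V w \<partial>trans L z) \<le> V z * (ennreal (exp (a * k)) * (\<integral>\<^sup>+d. exp (b * real_of_int (snd d)) \<partial>\<mu>))"
      using step[of z] inner jumps by simp
    also have "\<dots> \<le> V z"
      using mult_left_mono[OF drift, of "V z"] by simp
    finally show "(\<integral>\<^sup>+w. V w \<partial>trans L z) \<le> V z" .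
  next
    fix z
    assume "z \<in> H" "snd z = l"
    then show "1 \<le> V z"
      using target[of z] \<open>0 \<le> a\<close> by (simp add: V_def)
  qed
  also have "\<dots> \<le> V (x, y) * (ennreal (exp (a * k)) * (\<integral>\<^sup>+d. exp (b * real_of_int (snd d)) \<partial>L (x, y)))"
    using step jumps_start by blast
  also have "\<dots> = ennreal (exp (a * (K + k - x) + b * (y - l))) * (\<integral>\<^sup>+d. exp (b * real_of_int (snd d)) \<partial>L (x, y))"
  proof -
    have "V (x, y) * ennreal (exp (a * k)) = ennreal (exp (a * (K + k - x) + b * (y - l)))"
      by (simp add: V_def ennreal_mult[symmetric] algebra_simps flip: exp_add)
    then show ?thesis
      by (simp only: mult.assoc[symmetric])
  qed
  finally show ?thesis .
qed

lemma hit_before_exit_uniform_exp_bound: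
  fixes L :: "state \<Rightarrow> (int \<times> int) pmf" and \<mu> :: "(int \<times> int) pmf" and K k Y :: int and b M :: real
  assumes inner: "\<And>z. z \<in> G \<Longrightarrow> z \<notin> H \<Longrightarrow> L z = \<mu>"
    and jumps: "\<And>d. d \<in> set_pmf \<mu> \<Longrightarrow> - k \<le> fst d"
    and target: "\<And>z. z \<in> H \<Longrightarrow> fst z \<le> K"
    and "0 < b" and drift: "(\<integral>\<^sup>+d. exp (b * real_of_int (snd d)) \<partial>\<mu>) < 1"
    and start_jumps: "\<And>z d. z \<in> S \<Longrightarrow> d \<in> set_pmf (L z) \<Longrightarrow> - k \<le> fst d"
    and start_moment: "\<And>z. z \<in> S \<Longrightarrow> (\<integral>\<^sup>+d. exp (b * real_of_int (snd d)) \<partial>L z) \<le> M"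
    and start_region: "\<And>z. z \<in> S \<Longrightarrow> 0 \<le> fst z \<and> snd z \<le> Y"
    and "0 < M"
  shows "\<exists>Ct>0. \<exists>\<delta>>0. \<forall>z\<in>S. \<forall>l\<ge>0.
    hit_before_exit L H G l z \<le> ennreal (Ct * exp (- \<delta> * real_of_int (fst z + l)))"
proof -
  obtain a :: real where "0 < a" and a: "ennreal (exp (a * k)) * (\<integral>\<^sup>+d. exp (b * real_of_int (snd d)) \<partial>\<mu>) \<le> 1"
    using exists_exp_mult_le_one[OF drift] by blast
  define Ct where "Ct = exp (a * (K + k) + b * Y) * M"
  show ?thesis
  proof (intro exI conjI ballI allI impI)
    show "0 < Ct" "0 < min a b"
      using \<open>0 < a\<close> \<open>0 < b\<close> \<open>0 < M\<close> by (auto simp: Ct_def)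
    fix z and l :: int
    assume "z \<in> S" "0 \<le> l"
    obtain x y where z: "z = (x, y)"
      by fastforce
    have "hit_before_exit L H G l (x, y)
        \<le> ennreal (exp (a * (K + k - x) + b * (y - l))) * (\<integral>\<^sup>+d. exp (b * real_of_int (snd d)) \<partial>L (x, y))"
      using start_jumps[OF \<open>z \<in> S\<close>] \<open>0 < a\<close> a unfolding z
      by (intro hit_before_exit_le_exp[OF inner jumps]) (auto intro: target)
    also have "\<dots> \<le> ennreal (exp (a * (K + k - x) + b * (y - l))) * ennreal M"
      using start_moment[OF \<open>z \<in> S\<close>] unfolding z by (rule mult_left_mono) simp
    also have "\<dots> \<le> ennreal (Ct * exp (- min a b * (x + l)))"
    proof -
      have "exp (a * (K + k - x) + b * (y - l)) \<le> exp (a * (K + k) + b * Y) * exp (- min a b * (x + l))"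
        using exp_le_exp_mult_exp_min[of a b x l y Y "K + k"] \<open>0 < a\<close> \<open>0 < b\<close> \<open>0 \<le> l\<close>
          start_region[OF \<open>z \<in> S\<close>] unfolding z by simp
      from mult_right_mono[OF this less_imp_le[OF \<open>0 < M\<close>]] show ?thesis
        using \<open>0 < M\<close> by (simp add: Ct_def ennreal_mult[symmetric] ennreal_leI mult_ac)
    qed
    finally show "hit_before_exit L H G l z \<le> ennreal (Ct * exp (- min a b * (fst z + l)))"
      unfolding z by simp
  qed
qed

lemma lawZ_interior:
  "int k0 \<le> fst z \<Longrightarrow> int k0 \<le> snd z \<Longrightarrow> lawZ k0 \<mu> \<mu>' \<mu>'' \<mu>2 z = \<mu>"
  by (simp add: lawZ_def)

theorem lemma5p12:
  fixes k0 :: nat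
    and \<mu> :: "(int \<times> int) pmf"
    and \<mu>' \<mu>'' :: "nat \<Rightarrow> (int \<times> int) pmf"
    and \<mu>2 :: "nat \<Rightarrow> nat \<Rightarrow> (int \<times> int) pmf"
  assumes k0: "k0 \<ge> 1"
    and A1_mu: "\<And>a b. a < - int k0 \<or> b < - int k0 \<Longrightarrow> pmf \<mu> (a, b) = 0"
    and A1_mu': "\<And>j a b. j < k0 \<Longrightarrow> a < - int k0 \<or> b < - int j \<Longrightarrow> pmf (\<mu>' j) (a, b) = 0"
    and A1_mu'': "\<And>i a b. i < k0 \<Longrightarrow> b < - int k0 \<or> a < - int i \<Longrightarrow> pmf (\<mu>'' i) (a, b) = 0"
    and A1_mu2: "\<And>i j a b. i < k0 \<Longrightarrow> j < k0 \<Longrightarrow> a < - int i \<or> b < - int j \<Longrightarrow> pmf (\<mu>2 i j) (a, b) = 0"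
    and A2: "\<exists>\<delta> \<gamma> C. \<delta> > 0 \<and> \<gamma> > 0 \<and> C > 0 \<and>
               (\<forall>i j::nat. (\<integral>\<^sup>+ d. ennreal (exp (\<delta> * real_of_int (fst d) + \<gamma> * real_of_int (snd d)))
                    \<partial>measure_pmf (lawZ k0 \<mu> \<mu>' \<mu>'' \<mu>2 (int i, int j))) \<le> ennreal C)"
    and A3_Z0: "irreducible_on UNIV (\<lambda>_. \<mu>)"
    and A3_Z1: "irreducible_on {x. fst x \<ge> 0} (law1 k0 \<mu> \<mu>'')"
    and A3_Z2: "irreducible_on {x. snd x \<ge> 0} (law2 k0 \<mu> \<mu>')"
    and A3_Z: "irreducible_on {x. fst x \<ge> 0 \<and> snd x \<ge> 0} (lawZ k0 \<mu> \<mu>' \<mu>'' \<mu>2)"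
    and m2_neg: "measure_pmf.expectation \<mu> (\<lambda>d. real_of_int (snd d)) < 0"
  shows "\<forall>k::nat. \<exists>Ct>0. \<exists>\<delta>t>0. \<forall>i j l::nat. i \<ge> k0 \<longrightarrow> j < k0 \<longrightarrow>
           hit_before_exit (lawZ k0 \<mu> \<mu>' \<mu>'' \<mu>2)
             {x. fst x \<le> int (max (k0 - 1) k)} {x. snd x \<ge> int k0} (int l) (int i, int j)
           \<le> ennreal (Ct * exp (- \<delta>t * (real i + real l)))"
proof (intro allI)
  fix k :: nat
  let ?L = "lawZ k0 \<mu> \<mu>' \<mu>'' \<mu>2"
  let ?H = "{x. fst x \<le> int (max (k0 - 1) k)}" and ?G = "{x. snd x \<ge> int k0}"
  let ?S = "{z. int k0 \<le> fst z \<and> 0 \<le> snd z \<and> snd z < int k0}"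
  obtain d0 g C :: real where "0 < d0" "0 < g" "0 < C"
    and joint_moment: "\<And>i j::nat. (\<integral>\<^sup>+d. exp (d0 * real_of_int (fst d) + g * real_of_int (snd d)) \<partial>?L (int i, int j)) \<le> C"
    using A2 by blast
  have \<mu>_jumps: "- int k0 \<le> fst d" "- int k0 \<le> snd d" if "d \<in> set_pmf \<mu>" for d
    using that A1_mu[of "fst d" "snd d"] by (fastforce simp: set_pmf_iff)+
  have start_jumps: "- int k0 \<le> fst d" if "z \<in> ?S" "d \<in> set_pmf (?L z)" for z d
    using that A1_mu'[of "nat (snd z)" "fst d" "snd d"] by (fastforce simp: lawZ_def set_pmf_iff)
  have \<mu>_moment: "(\<integral>\<^sup>+d. exp (g * real_of_int (snd d)) \<partial>\<mu>) \<le> ennreal (exp (d0 * k0)) * C"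
    using nn_integral_exp_snd_le_joint[of d0 \<mu> "int k0"] joint_moment[of k0 k0] \<mu>_jumps \<open>0 < d0\<close>
    by (simp add: lawZ_interior)
  have "- real k0 \<le> real_of_int (snd d)" if "d \<in> set_pmf \<mu>" for d
    using \<mu>_jumps(2)[OF that] by linarith
  moreover have "(\<integral>\<^sup>+d. exp (g * real_of_int (snd d)) \<partial>\<mu>) < \<infinity>"
    using \<mu>_moment by (rule le_less_trans) (simp add: ennreal_mult_less_top)
  ultimately obtain b where "0 < b" "b \<le> g" and drift: "(\<integral>\<^sup>+d. exp (b * real_of_int (snd d)) \<partial>\<mu>) < 1"
    using exp_moment_less_one_if_negative_mean[OF \<open>0 < g\<close> _ _ m2_neg] by blast
  have "\<exists>Ct>0. \<exists>\<delta>>0. \<forall>z\<in>?S. \<forall>l\<ge>0. hit_before_exit ?L ?H ?G l z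
      \<le> ennreal (Ct * exp (- \<delta> * real_of_int (fst z + l)))"
  proof (rule hit_before_exit_uniform_exp_bound[where Y = "int k0", OF _ \<mu>_jumps(1) _ \<open>0 < b\<close> drift start_jumps])
    fix z
    assume "z \<in> ?S"
    have "(\<integral>\<^sup>+d. exp (b * real_of_int (snd d)) \<partial>?L z) \<le> 1 + (\<integral>\<^sup>+d. exp (g * real_of_int (snd d)) \<partial>?L z)"
      using \<open>0 < b\<close> \<open>b \<le> g\<close> by (intro nn_integral_exp_mult_le_one_plus) auto
    also have "\<dots> \<le> 1 + ennreal (exp (d0 * k0)) * C"
      using nn_integral_exp_snd_le_joint[of d0 "?L z" "int k0"] joint_moment[of "nat (fst z)" "nat (snd z)"]
        start_jumps[OF \<open>z \<in> ?S\<close>] \<open>z \<in> ?S\<close> \<open>0 < d0\<close> by (simp add: add_left_mono)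
    finally show "(\<integral>\<^sup>+d. exp (b * real_of_int (snd d)) \<partial>?L z) \<le> 1 + exp (d0 * k0) * C"
      using \<open>0 < C\<close> by (simp add: ennreal_mult)
  qed (use \<open>0 < C\<close> in \<open>auto simp: lawZ_interior add_pos_pos\<close>)
  then obtain Ct \<delta> :: real where "0 < Ct" "0 < \<delta>" and bound: "\<forall>z\<in>?S. \<forall>l\<ge>0.
      hit_before_exit ?L ?H ?G l z
      \<le> ennreal (Ct * exp (- \<delta> * real_of_int (fst z + l)))"
    by (elim exE conjE) (rule that; assumption)
  show "\<exists>Ct>0. \<exists>\<delta>t>0. \<forall>i j l::nat. i \<ge> k0 \<longrightarrow> j < k0 \<longrightarrow>
      hit_before_exit ?L ?H ?G (int l) (int i, int j)
      \<le> ennreal (Ct * exp (- \<delta>t * (real i + real l)))"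
  proof (intro exI conjI allI impI)
    fix i j l :: nat
    assume "k0 \<le> i" "j < k0"
    then show "hit_before_exit ?L ?H ?G (int l) (int i, int j)
        \<le> ennreal (Ct * exp (- \<delta> * (real i + real l)))"
      using bound[rule_format, of "(int i, int j)" "int l"] by simp
  qed fact+
qed

end
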